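(* Let $W$ be a non-trivial cyclically reduced word over $Y_C\cup Y_C^{-1}$ which represents the identity in the group $Q_C=\langle Y_C\mid \mathcal{S}_C\rangle$. Then some non-trivial subword of some cyclic permutation of $W$ is a cyclic permutation of (a reduced word representing) an element of the normal closure $\langle\langle \mathcal{S}_C\rangle\rangle^F$ of $\mathcal{S}_C$ in $F$. In particular, $\|W\|\ge C$.
   Context: Let $Q$ be a finitely generated recursively presented group with presentation $\langle Y\mid\mathcal{S}\rangle$, where $Y=\{y_1,\dots,y_m\}$ is finite, $\mathcal{S}$ is a recursive set of positive words over $Y$ (words using only letters of $Y$, not $Y^{-1}$), and the empty word is not in $\mathcal{S}$. Let $C\ge1$ be an integer. For $i=1,\dots,m$ let $Y_{C,i}=\{a_{1,i},\dots,a_{C,i}\}$, $Y_C=\bigcup_iY_{C,i}$ (all letters distinct), $A_i=a_{1,i}\cdots a_{C,i}$, $\mathcal{D}=\{A_1,\dots,A_m\}$, and $F=\langle\mathcal{D}\rangle\le F(Y_C)$ (free with basis $\mathcal{D}$). For $r=r(y_1,\dots,y_m)\in\mathcal{S}$ let $r_C=r(A_1,\dots,A_m)$ and $\mathcal{S}_C=\{r_C:r\in\mathcal{S}\}$. $\|W\|$ is the number of letters of $W$. *)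

theory Defs
  imports Main
begin

text \<open>Words over a generating set and its inverses: a letter is a pair (x, e) where
  e = False means the generator x and e = True means its inverse.\<close>

type_synonym 'g word = "('g \<times> bool) list"

definition inv_letter :: "'g \<times> bool \<Rightarrow> 'g \<times> bool" where
  "inv_letter a = (fst a, \<not> snd a)"

definition inv_word :: "'g word \<Rightarrow> 'g word" where
  "inv_word w = rev (map inv_letter w)"

definition reduced :: "'g word \<Rightarrow> bool" where
  "reduced w \<longleftrightarrow> (\<forall>i. Suc i < length w \<longrightarrow> w ! Suc i \<noteq> inv_letter (w ! i))"

definition cyclically_reduced :: "'g word \<Rightarrow> bool" where
  "cyclically_reduced w \<longleftrightarrow> reduced w \<and> (w \<noteq> [] \<longrightarrow> hd w \<noteq> inv_letter (last w))"

inductive cancel_step :: "'g word \<Rightarrow> 'g word \<Rightarrow> bool" where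
  "cancel_step (u @ [a, inv_letter a] @ v) (u @ v)"

definition free_eq :: "'g word \<Rightarrow> 'g word \<Rightarrow> bool" where
  "free_eq = equivclp cancel_step"

definition words_over :: "'g set \<Rightarrow> 'g word set" where
  "words_over X = {w. \<forall>a \<in> set w. fst a \<in> X}"

inductive_set conj_products :: "'g word set \<Rightarrow> 'g word set \<Rightarrow> 'g word set"
  for Conj R where
  nil: "[] \<in> conj_products Conj R"
| pos: "\<lbrakk>u \<in> Conj; r \<in> R; w \<in> conj_products Conj R\<rbrakk>
          \<Longrightarrow> u @ r @ inv_word u @ w \<in> conj_products Conj R"
| neg: "\<lbrakk>u \<in> Conj; r \<in> R; w \<in> conj_products Conj R\<rbrakk>
          \<Longrightarrow> u @ inv_word r @ inv_word u @ w \<in> conj_products Conj R"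

text \<open>w represents an element of the normal closure of R in the subgroup generated
  (as a group) by the conjugator words Conj (Conj assumed closed under products
  and inverses).\<close>
definition in_normal_closure :: "'g word set \<Rightarrow> 'g word set \<Rightarrow> 'g word \<Rightarrow> bool" where
  "in_normal_closure Conj R w \<longleftrightarrow> (\<exists>v \<in> conj_products Conj R. free_eq w v)"

text \<open>The setting: Y = {y_1..y_m}; Y_C has letters a_{j,i} = (j,i), 1 \<le> j \<le> C, 1 \<le> i \<le> m.\<close>
definition YC :: "nat \<Rightarrow> nat \<Rightarrow> (nat \<times> nat) set" where
  "YC C m = {(j, i). 1 \<le> j \<and> j \<le> C \<and> 1 \<le> i \<and> i \<le> m}"

definition A_word :: "nat \<Rightarrow> nat \<Rightarrow> (nat \<times> nat) word" where
  "A_word C i = map (\<lambda>j. ((j, i), False)) [1..<Suc C]"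

text \<open>r_C = r(A_1,...,A_m) for a positive word r over Y, given as a list of indices.\<close>
definition subst_C :: "nat \<Rightarrow> nat list \<Rightarrow> (nat \<times> nat) word" where
  "subst_C C r = concat (map (A_word C) r)"

definition S_C :: "nat \<Rightarrow> nat list set \<Rightarrow> (nat \<times> nat) word set" where
  "S_C C S = subst_C C ` S"

definition F_words :: "nat \<Rightarrow> nat \<Rightarrow> (nat \<times> nat) word set" where
  "F_words C m = {concat (map (\<lambda>(i, e). if e then inv_word (A_word C i) else A_word C i) xs)
                  | xs. \<forall>p \<in> set xs. 1 \<le> fst p \<and> fst p \<le> m}"

end

theory Submission
  imports Defs "HOL-Library.Sublist"
begin

text \<open>
  Read the letters of Y_C as the edges of a rose with m petals, each subdivided into C edges:
  a_{j,i} runs from the vertex (j-1, i) to (j, i), where (0, i) and (C, i) are the base vertex.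
  Sending a_{j,i} to t_{j-1,i} y_i^{[j = C]} t_{j,i}^{-1} in the free product of Q with the free
  group on the other vertices (t = 1 at the base vertex) maps A_i to y_i and hence kills S_C, so W
  acts trivially on the normal forms of this free product. Cut W into maximal paths: the end of
  each differs from the start of the next, so no t-syllables cancel between their images, and the
  image of W can collapse only if some closed subpath of W has a label trivial in Q. Stripping
  inverse end letters makes such a loop cyclically reduced, and then it passes through the base
  vertex. Rotated to start there, it has length at least C and equals, in F(Y_C), its label with
  y_i replaced by A_i, which lies in the normal closure of S_C in F.
\<close>

section \<open>Free reduction and normal closures\<close>

lemma inv_letter_inv_letter [simp]: "inv_letter (inv_letter a) = a"
  by (cases a) (simp add: inv_letter_def)

lemma inv_letter_neq [simp]: "inv_letter a \<noteq> a" "a \<noteq> inv_letter a"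
  by (cases a; simp add: inv_letter_def)+

lemma inv_word_Nil [simp]: "inv_word [] = []"
  by (simp add: inv_word_def)

lemma inv_word_Cons [simp]: "inv_word (a # w) = inv_word w @ [inv_letter a]"
  by (simp add: inv_word_def)

lemma inv_word_append [simp]: "inv_word (u @ v) = inv_word v @ inv_word u"
  by (simp add: inv_word_def)

lemma inv_word_inv_word [simp]: "inv_word (inv_word w) = w"
  by (simp add: inv_word_def rev_map comp_def)

lemma reduced_Nil [simp]: "reduced []"
  by (simp add: reduced_def)

lemma reduced_iff_successively: "reduced w \<longleftrightarrow> successively (\<lambda>a b. b \<noteq> inv_letter a) w"
  by (simp add: reduced_def successively_conv_nth)

lemma reduced_append:
  "reduced (xs @ ys) \<longleftrightarrow> reduced xs \<and> reduced ys \<and> (xs = [] \<or> ys = [] \<or> hd ys \<noteq> inv_letter (last xs))"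
  by (simp add: reduced_iff_successively successively_append_iff)

lemma reduced_Cons: "reduced (a # w) \<longleftrightarrow> (w = [] \<or> hd w \<noteq> inv_letter a) \<and> reduced w"
  by (auto simp: reduced_iff_successively successively_Cons)

lemma free_eq_refl [simp]: "free_eq x x"
  by (simp add: free_eq_def)

lemma free_eq_sym: "free_eq x y \<Longrightarrow> free_eq y x"
  unfolding free_eq_def by (rule equivclp_sym)

lemma free_eq_trans [trans]: "free_eq x y \<Longrightarrow> free_eq y z \<Longrightarrow> free_eq x z"
  unfolding free_eq_def by (rule equivclp_trans)

lemma free_eq_cancel: "free_eq (u @ [a, inv_letter a] @ v) (u @ v)"
  unfolding free_eq_def by (rule r_into_equivclp) (rule cancel_step.intros)

lemma free_eq_invariant:
  assumes cancel: "\<And>u a v. f (u @ [a, inv_letter a] @ v) = f (u @ v)"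
    and "free_eq x y"
  shows "f x = f y"
proof -
  have step: "f y = f z" if "cancel_step y z \<or> cancel_step z y" for y z
    using that cancel[simplified] by (auto elim!: cancel_step.cases)
  have "equivclp cancel_step x y"
    using \<open>free_eq x y\<close> by (simp add: free_eq_def)
  then show ?thesis
    by (induction rule: equivclp_induct) (simp_all add: step)
qed

lemma free_eq_map:
  assumes cancel: "\<And>u a v. free_eq (f (u @ [a, inv_letter a] @ v)) (f (u @ v))"
    and "free_eq x y"
  shows "free_eq (f x) (f y)"
proof -
  have step: "free_eq (f y) (f z)" if "cancel_step y z \<or> cancel_step z y" for y z
    using that cancel[simplified] by (auto elim!: cancel_step.cases intro: free_eq_sym)
  have "equivclp cancel_step x y"
    using \<open>free_eq x y\<close> by (simp add: free_eq_def)
  then show ?thesis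
    by (induction rule: equivclp_induct) (auto intro: step free_eq_trans)
qed

lemma free_eq_append_cong: "free_eq x y \<Longrightarrow> free_eq (p @ x @ q) (p @ y @ q)"
  by (rule free_eq_map) (use free_eq_cancel[of "p @ _" _ "_ @ q"] in simp)

lemma free_eq_inv_word: "free_eq x y \<Longrightarrow> free_eq (inv_word x) (inv_word y)"
  by (rule free_eq_map) (use free_eq_cancel[of "inv_word _" _ "inv_word _"] in simp)

lemma free_eq_cancel_inv_word: "free_eq (p @ w @ inv_word w @ q) (p @ q)"
proof (induction w arbitrary: p q)
  case (Cons a w)
  have "free_eq ((p @ [a]) @ w @ inv_word w @ ([inv_letter a] @ q))
      ((p @ [a]) @ [inv_letter a] @ q)"
    by (rule Cons.IH)
  also have "free_eq ((p @ [a]) @ [inv_letter a] @ q) (p @ q)"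
    using free_eq_cancel[of p a q] by simp
  finally show ?case by simp
qed simp

lemma free_eq_cancel_inv_word': "free_eq (p @ inv_word w @ w @ q) (p @ q)"
  using free_eq_cancel_inv_word[of p "inv_word w" q] by simp

lemma conj_products_append:
  "x \<in> conj_products Conj R \<Longrightarrow> y \<in> conj_products Conj R \<Longrightarrow> x @ y \<in> conj_products Conj R"
  by (induction rule: conj_products.induct) (auto intro: conj_products.intros)

lemma conjugate_in_conj_products:
  assumes "u \<in> Conj" "r \<in> R"
  shows "u @ r @ inv_word u \<in> conj_products Conj R"
    and "u @ inv_word r @ inv_word u \<in> conj_products Conj R"
  using conj_products.pos[OF assms conj_products.nil] conj_products.neg[OF assms conj_products.nil]
  by simp_all

lemma conj_products_inv_word:
  "x \<in> conj_products Conj R \<Longrightarrow> inv_word x \<in> conj_products Conj R"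
proof (induction rule: conj_products.induct)
  case nil
  then show ?case by (simp add: conj_products.nil)
next
  case (pos u r w)
  then show ?case
    using conj_products_append[OF pos.IH conjugate_in_conj_products(2)[OF pos.hyps(1,2)]] by simp
next
  case (neg u r w)
  then show ?case
    using conj_products_append[OF neg.IH conjugate_in_conj_products(1)[OF neg.hyps(1,2)]] by simp
qed

lemma in_normal_closure_free_eq:
  "in_normal_closure Conj R x \<Longrightarrow> free_eq x y \<Longrightarrow> in_normal_closure Conj R y"
  unfolding in_normal_closure_def by (meson free_eq_sym free_eq_trans)

lemma in_normal_closure_conj_products:
  "x \<in> conj_products Conj R \<Longrightarrow> in_normal_closure Conj R x"
  unfolding in_normal_closure_def using free_eq_refl by blast

lemma in_normal_closure_Nil: "in_normal_closure Conj R []"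
  by (rule in_normal_closure_conj_products) (rule conj_products.nil)

lemma in_normal_closure_append:
  assumes "in_normal_closure Conj R x" "in_normal_closure Conj R y"
  shows "in_normal_closure Conj R (x @ y)"
proof -
  obtain v v' where "v \<in> conj_products Conj R" "free_eq x v"
    and "v' \<in> conj_products Conj R" "free_eq y v'"
    using assms unfolding in_normal_closure_def by blast
  moreover from this have "free_eq (x @ y) (v @ v')"
    using free_eq_append_cong[of x v "[]" y] free_eq_append_cong[of y v' v "[]"]
    by (auto intro: free_eq_trans)
  ultimately show ?thesis
    unfolding in_normal_closure_def by (blast intro: conj_products_append)
qed

lemma in_normal_closure_inv_word:
  "in_normal_closure Conj R x \<Longrightarrow> in_normal_closure Conj R (inv_word x)"
  unfolding in_normal_closure_def using free_eq_inv_word conj_products_inv_word by blast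

lemma in_normal_closure_conj:
  assumes closed: "\<And>a b. a \<in> Conj \<Longrightarrow> b \<in> Conj \<Longrightarrow> a @ b \<in> Conj"
    and u: "u \<in> Conj" and x: "in_normal_closure Conj R x"
  shows "in_normal_closure Conj R (u @ x @ inv_word u)"
proof -
  have conj_prepend: "in_normal_closure Conj R (u @ (c @ w) @ inv_word u)"
    if "u @ c @ inv_word u \<in> conj_products Conj R" "in_normal_closure Conj R (u @ w @ inv_word u)"
    for c w
  proof -
    have "in_normal_closure Conj R ((u @ c @ inv_word u) @ (u @ w @ inv_word u))"
      using that by (blast intro: in_normal_closure_append in_normal_closure_conj_products)
    moreover have "free_eq ((u @ c @ inv_word u) @ (u @ w @ inv_word u)) (u @ (c @ w) @ inv_word u)"
      using free_eq_cancel_inv_word'[of "u @ c" u "w @ inv_word u"] by simp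
    ultimately show ?thesis by (rule in_normal_closure_free_eq)
  qed
  have "in_normal_closure Conj R (u @ v @ inv_word u)" if "v \<in> conj_products Conj R" for v
    using that
  proof (induction rule: conj_products.induct)
    case nil
    show ?case
      using in_normal_closure_free_eq[OF in_normal_closure_Nil free_eq_sym]
        free_eq_cancel_inv_word[of "[]" u "[]"] by simp
  next
    case (pos u1 r w)
    have "(u @ u1) @ r @ inv_word (u @ u1) \<in> conj_products Conj R"
      using pos.hyps u closed by (blast intro: conjugate_in_conj_products)
    then show ?case
      using conj_prepend[of "u1 @ r @ inv_word u1" w] pos.IH by simp
  next
    case (neg u1 r w)
    have "(u @ u1) @ inv_word r @ inv_word (u @ u1) \<in> conj_products Conj R"
      using neg.hyps u closed by (blast intro: conjugate_in_conj_products)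
    then show ?case
      using conj_prepend[of "u1 @ inv_word r @ inv_word u1" w] neg.IH by simp
  qed
  moreover obtain v where "v \<in> conj_products Conj R" "free_eq x v"
    using x unfolding in_normal_closure_def by blast
  ultimately show ?thesis
    using free_eq_append_cong[of x v u "inv_word u"]
    by (meson free_eq_sym in_normal_closure_free_eq)
qed

section \<open>Free products with a quotient of a free group\<close>

text \<open>
  Normal forms in the free product of F/N with the free group on 'v: a syllable Inl c is a
  nontrivial element of F/N, given by its chosen representative c = canon c, and Inr (v, b) is
  the generator t_v, inverted if b.
\<close>

type_synonym ('a, 'v) syllable = "'a word + 'v \<times> bool"

locale word_normal_subgroup =
  fixes N :: "'a word \<Rightarrow> bool"
  assumes N_Nil: "N []"
    and N_append: "N x \<Longrightarrow> N y \<Longrightarrow> N (x @ y)"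
    and N_inv_word: "N x \<Longrightarrow> N (inv_word x)"
    and N_conj: "N x \<Longrightarrow> N (u @ x @ inv_word u)"
    and N_free_eq: "free_eq x y \<Longrightarrow> N x \<Longrightarrow> N y"
begin

lemma N_cancel_inv_word: "N (p @ x @ inv_word x @ q) \<longleftrightarrow> N (p @ q)"
  by (meson N_free_eq free_eq_cancel_inv_word free_eq_sym)

lemma N_cancel_inv_word': "N (p @ inv_word x @ x @ q) \<longleftrightarrow> N (p @ q)"
  using N_cancel_inv_word[of p "inv_word x" q] by simp

lemma N_rotate: "N (x @ y) \<Longrightarrow> N (y @ x)"
  using N_conj[of "x @ y" "inv_word x"] N_cancel_inv_word'[of "[]" x "y @ x"] by simp

definition equiv_mod :: "'a word \<Rightarrow> 'a word \<Rightarrow> bool" where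
  "equiv_mod x y \<longleftrightarrow> N (x @ inv_word y)"

lemma equiv_mod_refl [simp]: "equiv_mod x x"
  using N_cancel_inv_word[of "[]" x "[]"] N_Nil by (simp add: equiv_mod_def)

lemma equiv_mod_sym: "equiv_mod x y \<Longrightarrow> equiv_mod y x"
  using N_inv_word by (fastforce simp: equiv_mod_def)

lemma equiv_mod_trans: "equiv_mod x y \<Longrightarrow> equiv_mod y z \<Longrightarrow> equiv_mod x z"
  using N_append[of "x @ inv_word y" "y @ inv_word z"] N_cancel_inv_word'[of x y "inv_word z"]
  by (simp add: equiv_mod_def)

lemma equiv_mod_append_left: "equiv_mod x y \<Longrightarrow> equiv_mod (g @ x) (g @ y)"
  using N_conj[of "x @ inv_word y" g] by (simp add: equiv_mod_def)

lemma equiv_mod_append_right: "equiv_mod x y \<Longrightarrow> equiv_mod (x @ h) (y @ h)"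
  using N_cancel_inv_word[of x h "inv_word y"] by (simp add: equiv_mod_def)

lemma N_iff_equiv_mod_Nil: "N x \<longleftrightarrow> equiv_mod x []"
  by (simp add: equiv_mod_def)

lemma equiv_mod_N_iff: "equiv_mod x y \<Longrightarrow> N x \<longleftrightarrow> N y"
  by (meson N_iff_equiv_mod_Nil equiv_mod_sym equiv_mod_trans)

definition canon :: "'a word \<Rightarrow> 'a word" where
  "canon x = (SOME y. equiv_mod x y)"

lemma equiv_mod_canon: "equiv_mod x (canon x)"
  unfolding canon_def by (rule someI[of _ x]) simp

lemma canon_eqI:
  assumes "equiv_mod x y"
  shows "canon x = canon y"
proof -
  have "equiv_mod x = equiv_mod y"
    using assms by (intro ext) (meson equiv_mod_sym equiv_mod_trans)
  then show ?thesis
    by (simp add: canon_def)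
qed

lemma canon_canon [simp]: "canon (canon x) = canon x"
  using canon_eqI[OF equiv_mod_sym[OF equiv_mod_canon]] .

lemma N_canon_iff [simp]: "N (canon x) \<longleftrightarrow> N x"
  using equiv_mod_N_iff equiv_mod_canon by blast

fun syllable_nf :: "('a, 'v) syllable \<Rightarrow> bool" where
  "syllable_nf (Inl c) \<longleftrightarrow> \<not> N c \<and> canon c = c"
| "syllable_nf (Inr _) \<longleftrightarrow> True"

fun adjacent_nf :: "('a, 'v) syllable \<Rightarrow> ('a, 'v) syllable \<Rightarrow> bool" where
  "adjacent_nf (Inl _) (Inl _) \<longleftrightarrow> False"
| "adjacent_nf (Inr (v, b)) (Inr (v', b')) \<longleftrightarrow> v' \<noteq> v \<or> b' = b"
| "adjacent_nf _ _ \<longleftrightarrow> True"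

definition normal_form :: "('a, 'v) syllable list \<Rightarrow> bool" where
  "normal_form L \<longleftrightarrow> list_all syllable_nf L \<and> successively adjacent_nf L"

lemma normal_form_Nil [simp]: "normal_form []"
  by (simp add: normal_form_def)

lemma adjacent_nf_Inl [simp]: "adjacent_nf (Inl c) y \<longleftrightarrow> \<not> isl y"
  by (cases y) auto

lemma normal_form_Cons:
  "normal_form (x # L) \<longleftrightarrow> syllable_nf x \<and> (L = [] \<or> adjacent_nf x (hd L)) \<and> normal_form L"
  by (auto simp: normal_form_def successively_Cons)

fun mul_vertex :: "'v option \<Rightarrow> bool \<Rightarrow> ('a, 'v) syllable list \<Rightarrow> ('a, 'v) syllable list" where
  "mul_vertex None b L = L"
| "mul_vertex (Some v) b (Inr (v', b') # L) =
    (if v' = v \<and> b' = (\<not> b) then L else Inr (v, b) # Inr (v', b') # L)"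
| "mul_vertex (Some v) b L = Inr (v, b) # L"

fun mul_quot :: "'a word \<Rightarrow> ('a, 'v) syllable list \<Rightarrow> ('a, 'v) syllable list" where
  "mul_quot g (Inl c # L) = (if N (g @ c) then L else Inl (canon (g @ c)) # L)"
| "mul_quot g L = (if N g then L else Inl (canon g) # L)"

lemma normal_form_mul_vertex: "normal_form L \<Longrightarrow> normal_form (mul_vertex vo b L)"
  by (induction vo b L rule: mul_vertex.induct) (auto simp: normal_form_Cons)

lemma mul_vertex_inverse:
  assumes "normal_form L" "b' \<noteq> b"
  shows "mul_vertex vo b' (mul_vertex vo b L) = L"
  using assms
proof (induction vo b L rule: mul_vertex.induct)
  case (2 v b v' b'' L)
  then show ?case
    by (cases L; cases "hd L") (auto simp: normal_form_Cons)
qed auto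

lemma mul_quot_not_Inl:
  "\<nexists>c L'. L = Inl c # L' \<Longrightarrow> mul_quot g L = (if N g then L else Inl (canon g) # L)"
  by (cases L; cases "hd L") auto

lemma normal_form_mul_quot: "normal_form L \<Longrightarrow> normal_form (mul_quot g L)"
  by (induction g L rule: mul_quot.induct) (auto simp: normal_form_Cons)

lemma mul_quot_Inl:
  "\<nexists>c' L'. L = Inl c' # L' \<Longrightarrow> mul_quot g (Inl c # L) = mul_quot (g @ c) L"
  by (simp add: mul_quot_not_Inl)

lemma mul_quot_cong:
  assumes "equiv_mod g g'"
  shows "mul_quot g L = mul_quot g' L"
proof (cases "\<exists>c L'. L = Inl c # L'")
  case True
  then obtain c L' where "L = Inl c # L'" by blast
  moreover have "equiv_mod (g @ c) (g' @ c)"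
    using assms by (rule equiv_mod_append_right)
  ultimately show ?thesis
    using equiv_mod_N_iff canon_eqI by auto
next
  case False
  then show ?thesis
    using mul_quot_not_Inl[OF False] equiv_mod_N_iff[OF assms] canon_eqI[OF assms] by simp
qed

lemma mul_quot_Nil: "normal_form L \<Longrightarrow> mul_quot [] L = L"
  by (induction "[] :: 'a word" L rule: mul_quot.induct) (auto simp: normal_form_Cons N_Nil)

lemma mul_quot_trivial: "N g \<Longrightarrow> normal_form L \<Longrightarrow> mul_quot g L = L"
  using mul_quot_cong[of g "[]" L] mul_quot_Nil by (simp add: N_iff_equiv_mod_Nil)

lemma mul_quot_mul_quot:
  assumes "normal_form L"
  shows "mul_quot g (mul_quot h L) = mul_quot (g @ h) L"
proof -
  have no_Inl: "mul_quot g (mul_quot h K) = mul_quot (g @ h) K"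
    if K: "\<nexists>c K'. K = Inl c # K'" for g h and K :: "('a, 'v) syllable list"
  proof (cases "N h")
    case True
    then have "equiv_mod (g @ h) g"
      using equiv_mod_append_left[of h "[]" g] by (simp add: N_iff_equiv_mod_Nil)
    then show ?thesis
      using K True mul_quot_cong[of "g @ h" g K] by (simp add: mul_quot_not_Inl)
  next
    case False
    have "equiv_mod (g @ canon h) (g @ h)"
      by (rule equiv_mod_append_left) (rule equiv_mod_sym[OF equiv_mod_canon])
    then show ?thesis
      using K False mul_quot_cong[of "g @ canon h" "g @ h" K]
      by (simp add: mul_quot_not_Inl mul_quot_Inl)
  qed
  show ?thesis
  proof (cases "\<exists>c L'. L = Inl c # L'")
    case True
    then obtain c L' where L: "L = Inl c # L'" by blast
    have L': "\<nexists>c L''. L' = Inl c # L''"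
      using assms L by (auto simp: normal_form_Cons)
    have "mul_quot g (mul_quot h L) = mul_quot g (mul_quot (h @ c) L')"
      by (simp only: L mul_quot_Inl[OF L'])
    also have "\<dots> = mul_quot (g @ h @ c) L'"
      by (rule no_Inl[OF L'])
    also have "\<dots> = mul_quot (g @ h) L"
      by (simp only: L mul_quot_Inl[OF L'] append_assoc)
    finally show ?thesis .
  next
    case False
    then show ?thesis by (rule no_Inl)
  qed
qed

definition mul_segment ::
    "'v option \<Rightarrow> 'a word \<Rightarrow> 'v option \<Rightarrow> ('a, 'v) syllable list \<Rightarrow> ('a, 'v) syllable list" where
  "mul_segment s g e L = mul_vertex s False (mul_quot g (mul_vertex e True L))"

lemma normal_form_mul_segment: "normal_form L \<Longrightarrow> normal_form (mul_segment s g e L)"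
  by (simp add: mul_segment_def normal_form_mul_vertex normal_form_mul_quot)

lemma mul_segment_mul_segment:
  "normal_form L \<Longrightarrow> mul_segment s g e (mul_segment e h f L) = mul_segment s (g @ h) f L"
  by (simp add: mul_segment_def mul_vertex_inverse mul_quot_mul_quot
      normal_form_mul_vertex normal_form_mul_quot)

lemma mul_segment_trivial: "N g \<Longrightarrow> normal_form L \<Longrightarrow> mul_segment s g s L = L"
  by (simp add: mul_segment_def mul_vertex_inverse mul_quot_trivial normal_form_mul_vertex)

lemma mul_segment_inverse:
  assumes "normal_form L"
  shows "mul_segment e (inv_word g) s (mul_segment s g e L) = L"
proof -
  have "N (inv_word g @ g)"
    using N_cancel_inv_word'[of "[]" g "[]"] N_Nil by simp
  then show ?thesis
    using assms by (simp add: mul_segment_mul_segment mul_segment_trivial)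
qed

text \<open>For the base vertex None, where t = 1, this means: anything but a positive t_v.\<close>

definition starts_at :: "'v option \<Rightarrow> ('a, 'v) syllable list \<Rightarrow> bool" where
  "starts_at s L \<longleftrightarrow> L \<noteq> [] \<and>
     (case s of Some v \<Rightarrow> hd L = Inr (v, False) | None \<Rightarrow> isl (hd L) \<or> (\<exists>v. hd L = Inr (v, True)))"

lemma mul_segment_starts_at:
  assumes L: "L = [] \<or> (\<exists>e'. e' \<noteq> e \<and> starts_at e' L)" and nontrivial: "\<not> (s = e \<and> N g)"
  shows "starts_at s (mul_segment s g e L)"
proof (cases e)
  case None
  with L obtain v where "L = [] \<or> L \<noteq> [] \<and> hd L = Inr (v, False)"
    by (auto simp: starts_at_def split: option.splits)
  then show ?thesis
    using None nontrivial
    by (cases s; cases L) (auto simp: mul_segment_def mul_quot_not_Inl starts_at_def)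
next
  case (Some v)
  have "mul_vertex e True L = Inr (v, True) # L"
    using L Some by (cases L; cases "hd L") (auto simp: starts_at_def split: option.splits)
  then show ?thesis
    using Some nontrivial by (cases s) (auto simp: mul_segment_def mul_quot_not_Inl starts_at_def)
qed

end

section \<open>Substituting A_i for y_i\<close>

definition subst_A :: "nat \<Rightarrow> nat word \<Rightarrow> (nat \<times> nat) word" where
  "subst_A C xs = concat (map (\<lambda>(i, e). if e then inv_word (A_word C i) else A_word C i) xs)"

lemma subst_A_Nil [simp]: "subst_A C [] = []"
  by (simp add: subst_A_def)

lemma subst_A_Cons [simp]:
  "subst_A C ((i, e) # xs) = (if e then inv_word (A_word C i) else A_word C i) @ subst_A C xs"
  by (simp add: subst_A_def)

lemma subst_A_append [simp]: "subst_A C (xs @ ys) = subst_A C xs @ subst_A C ys"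
  by (simp add: subst_A_def)

lemma subst_A_inv_word [simp]: "subst_A C (inv_word xs) = inv_word (subst_A C xs)"
  by (induction xs) (auto simp: inv_letter_def)

lemma subst_A_free_eq: "free_eq x y \<Longrightarrow> free_eq (subst_A C x) (subst_A C y)"
proof (erule free_eq_map[rotated])
  fix u v and a :: "nat \<times> bool"
  show "free_eq (subst_A C (u @ [a, inv_letter a] @ v)) (subst_A C (u @ v))"
    by (cases a) (simp add: inv_letter_def free_eq_cancel_inv_word free_eq_cancel_inv_word')
qed

lemma subst_A_map_False: "subst_A C (map (\<lambda>i. (i, False)) r) = subst_C C r"
  by (simp add: subst_A_def subst_C_def comp_def)

text \<open>x represents 1 in Q, read through the substitution y_i \<mapsto> A_i.\<close>

definition trivial_in_Q :: "nat \<Rightarrow> nat list set \<Rightarrow> nat word \<Rightarrow> bool" where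
  "trivial_in_Q C S x \<longleftrightarrow> in_normal_closure (range (subst_A C)) (S_C C S) (subst_A C x)"

lemma word_normal_subgroup_trivial_in_Q: "word_normal_subgroup (trivial_in_Q C S)"
proof
  have closed: "a @ b \<in> range (subst_A C)"
    if "a \<in> range (subst_A C)" "b \<in> range (subst_A C)" for a b
  proof -
    from that obtain xa xb where "a = subst_A C xa" "b = subst_A C xb" by blast
    then have "a @ b = subst_A C (xa @ xb)" by simp
    then show ?thesis by (rule range_eqI)
  qed
  fix x y u
  show "trivial_in_Q C S []"
    by (simp add: trivial_in_Q_def in_normal_closure_Nil)
  show "trivial_in_Q C S x \<Longrightarrow> trivial_in_Q C S y \<Longrightarrow> trivial_in_Q C S (x @ y)"
    by (simp add: trivial_in_Q_def in_normal_closure_append)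
  show "trivial_in_Q C S x \<Longrightarrow> trivial_in_Q C S (inv_word x)"
    by (simp add: trivial_in_Q_def in_normal_closure_inv_word)
  show "trivial_in_Q C S x \<Longrightarrow> trivial_in_Q C S (u @ x @ inv_word u)"
    using in_normal_closure_conj[OF closed, of "subst_A C u"] by (simp add: trivial_in_Q_def)
  show "free_eq x y \<Longrightarrow> trivial_in_Q C S x \<Longrightarrow> trivial_in_Q C S y"
    unfolding trivial_in_Q_def by (blast intro: in_normal_closure_free_eq subst_A_free_eq)
qed

lemma trivial_in_Q_relator:
  assumes "r \<in> S"
  shows "trivial_in_Q C S (map (\<lambda>i. (i, False)) r)"
proof -
  have "[] @ subst_C C r @ inv_word [] \<in> conj_products (range (subst_A C)) (S_C C S)"
    by (rule conjugate_in_conj_products) (auto simp: assms S_C_def intro: range_eqI[of _ _ "[]"])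
  then show ?thesis
    by (simp add: trivial_in_Q_def subst_A_map_False in_normal_closure_conj_products)
qed

text \<open>
  Conjugators in range (subst_A C) may involve A_i with i > m. Deleting the letters of those
  petals is a homomorphism that fixes S_C and maps every conjugator into F_words C m.
\<close>

definition restrict_indices :: "nat \<Rightarrow> (nat \<times> nat) word \<Rightarrow> (nat \<times> nat) word" where
  "restrict_indices m w = filter (\<lambda>a. snd (fst a) \<in> {1..m}) w"

lemma restrict_indices_append [simp]:
  "restrict_indices m (u @ v) = restrict_indices m u @ restrict_indices m v"
  by (simp add: restrict_indices_def)

lemma restrict_indices_inv_word [simp]:
  "restrict_indices m (inv_word w) = inv_word (restrict_indices m w)"
  by (induction w) (auto simp: restrict_indices_def inv_letter_def)

lemma restrict_indices_free_eq:
  "free_eq x y \<Longrightarrow> free_eq (restrict_indices m x) (restrict_indices m y)"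
proof (erule free_eq_map[rotated])
  fix u v and a :: "(nat \<times> nat) \<times> bool"
  show "free_eq (restrict_indices m (u @ [a, inv_letter a] @ v)) (restrict_indices m (u @ v))"
    using free_eq_cancel[of "restrict_indices m u" a "restrict_indices m v"]
    by (auto simp: restrict_indices_def inv_letter_def)
qed

lemma restrict_indices_subst_A:
  "restrict_indices m (subst_A C xs) = subst_A C (filter (\<lambda>p. fst p \<in> {1..m}) xs)"
proof (induction xs)
  case (Cons p xs)
  have "restrict_indices m (A_word C i) = (if i \<in> {1..m} then A_word C i else [])" for i
    by (simp add: restrict_indices_def A_word_def filter_map comp_def)
  with Cons show ?case
    by (cases p) simp
qed (simp add: restrict_indices_def)

lemma restrict_indices_conj_products:
  assumes S: "\<forall>r \<in> S. set r \<subseteq> {1..m}"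
  shows "x \<in> conj_products (range (subst_A C)) (S_C C S) \<Longrightarrow>
    restrict_indices m x \<in> conj_products (F_words C m) (S_C C S)"
proof (induction rule: conj_products.induct)
  have "subst_A C ys \<in> F_words C m" if "\<forall>p\<in>set ys. fst p \<in> {1..m}" for ys
    using that by (auto simp: F_words_def subst_A_def)
  then have F: "restrict_indices m (subst_A C xs) \<in> F_words C m" for xs
    by (simp add: restrict_indices_subst_A)
  have R: "restrict_indices m r = r" if r: "r \<in> S_C C S" for r
  proof -
    obtain y where "y \<in> S" "r = subst_A C (map (\<lambda>i. (i, False)) y)"
      using r by (auto simp: S_C_def subst_A_map_False)
    moreover have "filter (\<lambda>p. fst p \<in> {1..m}) (map (\<lambda>i. (i, False)) y) = map (\<lambda>i. (i, False)) y"
      using S \<open>y \<in> S\<close> by (fastforce simp: filter_id_conv)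
    ultimately show ?thesis
      by (simp add: restrict_indices_subst_A)
  qed
  case nil
  then show ?case
    by (simp add: restrict_indices_def conj_products.nil)
  case (pos u r w)
  then show ?case
    using F R by (auto intro: conj_products.pos)
  case (neg u r w)
  then show ?case
    using F R by (auto intro: conj_products.neg)
qed

lemma in_normal_closure_F_words:
  assumes S: "\<forall>r \<in> S. set r \<subseteq> {1..m}" and V: "in_normal_closure (range (subst_A C)) (S_C C S) V"
    and over: "V \<in> words_over (YC C m)"
  shows "in_normal_closure (F_words C m) (S_C C S) V"
proof -
  obtain v where "v \<in> conj_products (range (subst_A C)) (S_C C S)" "free_eq V v"
    using V unfolding in_normal_closure_def by blast
  moreover have "restrict_indices m V = V"
    unfolding restrict_indices_def filter_id_conv using over by (auto simp: words_over_def YC_def)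
  ultimately show ?thesis
    unfolding in_normal_closure_def
    using restrict_indices_free_eq restrict_indices_conj_products[OF S] by metis
qed

section \<open>The subdivided rose\<close>

locale subdivided_rose =
  fixes C :: nat and S :: "nat list set"
  assumes C_pos: "1 \<le> C"

sublocale subdivided_rose \<subseteq> word_normal_subgroup "trivial_in_Q C S"
  by (rule word_normal_subgroup_trivial_in_Q)

context subdivided_rose
begin

definition vertex :: "nat \<Rightarrow> nat \<Rightarrow> (nat \<times> nat) option" where
  "vertex j i = (if j = 0 \<or> C \<le> j then None else Some (j, i))"

fun source :: "(nat \<times> nat) \<times> bool \<Rightarrow> (nat \<times> nat) option" where
  "source ((j, i), e) = (if e then vertex j i else vertex (j - 1) i)"

fun target :: "(nat \<times> nat) \<times> bool \<Rightarrow> (nat \<times> nat) option" where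
  "target ((j, i), e) = (if e then vertex (j - 1) i else vertex j i)"

fun label :: "(nat \<times> nat) \<times> bool \<Rightarrow> nat word" where
  "label ((j, i), e) = (if j = C then [(i, e)] else [])"

definition path_label :: "(nat \<times> nat) word \<Rightarrow> nat word" where
  "path_label w = concat (map label w)"

abbreviation is_path :: "(nat \<times> nat) word \<Rightarrow> bool" where
  "is_path \<equiv> successively (\<lambda>a b. target a = source b)"

definition act :: "(nat \<times> nat) word \<Rightarrow> (nat, nat \<times> nat) syllable list \<Rightarrow>
    (nat, nat \<times> nat) syllable list" where
  "act w L = foldr (\<lambda>a. mul_segment (source a) (label a) (target a)) w L"

lemma source_inv_letter [simp]: "source (inv_letter a) = target a"
  by (cases a) (auto simp: inv_letter_def)

lemma target_inv_letter [simp]: "target (inv_letter a) = source a"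
  by (cases a) (auto simp: inv_letter_def)

lemma label_inv_letter [simp]: "label (inv_letter a) = inv_word (label a)"
  by (cases a) (auto simp: inv_letter_def)

lemma path_label_Nil [simp]: "path_label [] = []"
  by (simp add: path_label_def)

lemma path_label_Cons [simp]: "path_label (a # w) = label a @ path_label w"
  by (simp add: path_label_def)

lemma path_label_append [simp]: "path_label (u @ w) = path_label u @ path_label w"
  by (simp add: path_label_def)

lemma act_Nil [simp]: "act [] L = L"
  by (simp add: act_def)

lemma act_Cons: "act (a # w) L = mul_segment (source a) (label a) (target a) (act w L)"
  by (simp add: act_def)

lemma act_append [simp]: "act (u @ w) L = act u (act w L)"
  by (simp add: act_def)

lemma normal_form_act: "normal_form L \<Longrightarrow> normal_form (act w L)"
  by (induction w) (simp_all add: act_Cons normal_form_mul_segment)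

lemma act_cancel: "normal_form L \<Longrightarrow> act (a # inv_letter a # w) L = act w L"
  using mul_segment_inverse[where s = "target a" and g = "inv_word (label a)" and e = "source a"]
  by (simp add: act_Cons normal_form_act)

lemma act_inv_word: "normal_form L \<Longrightarrow> act (inv_word u) (act u L) = L"
proof (induction u arbitrary: L)
  case (Cons a u)
  have "act [inv_letter a] (act (a # u) L) = act u L"
    using act_cancel[of L "inv_letter a" u] Cons.prems by (simp add: act_Cons)
  then show ?case
    using Cons by simp
qed simp

lemma act_path:
  "is_path P \<Longrightarrow> P \<noteq> [] \<Longrightarrow> normal_form L \<Longrightarrow>
    act P L = mul_segment (source (hd P)) (path_label P) (target (last P)) L"
proof (induction P rule: induct_list012)
  case (3 a b w)
  then show ?case
    by (simp add: act_Cons mul_segment_mul_segment normal_form_act)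
qed (simp_all add: act_Cons)

lemma act_A_word: "normal_form L \<Longrightarrow> act (A_word C i) L = mul_quot [(i, False)] L"
proof -
  have split: "A_word C i = map (\<lambda>j. ((j, i), False)) [1..<C] @ [((C, i), False)]"
    using C_pos by (simp add: A_word_def)
  have "is_path (A_word C i)"
    by (simp add: A_word_def successively_conv_nth del: upt_Suc)
  moreover have "hd (A_word C i) = ((1, i), False)"
    using C_pos by (simp add: A_word_def upt_rec)
  moreover have "path_label (A_word C i) = [(i, False)]"
    by (simp add: split path_label_def)
  moreover assume "normal_form L"
  ultimately show ?thesis
    using act_path[of "A_word C i" L] by (simp add: split vertex_def mul_segment_def)
qed

lemma act_subst_C: "normal_form L \<Longrightarrow> act (subst_C C r) L = mul_quot (map (\<lambda>i. (i, False)) r) L"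
proof (induction r)
  case Nil
  then show ?case by (simp add: subst_C_def mul_quot_Nil)
next
  case (Cons i r)
  then show ?case
    by (simp add: subst_C_def act_A_word mul_quot_mul_quot normal_form_mul_quot)
qed

lemma act_relator: "r \<in> S_C C S \<Longrightarrow> normal_form L \<Longrightarrow> act r L = L"
  by (auto simp: S_C_def act_subst_C mul_quot_trivial trivial_in_Q_relator)

lemma act_conj_products: "x \<in> conj_products Conj (S_C C S) \<Longrightarrow> normal_form L \<Longrightarrow> act x L = L"
proof (induction arbitrary: L rule: conj_products.induct)
  case (pos u r w)
  then show ?case
    using act_inv_word[of _ "inv_word u"] by (simp add: act_relator normal_form_act)
next
  case (neg u r w)
  then show ?case
    using act_inv_word[of _ "inv_word u"] act_inv_word[of _ r]
    by (simp add: act_relator normal_form_act)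
qed simp

lemma act_free_eq: "free_eq x y \<Longrightarrow> normal_form L \<Longrightarrow> act x L = act y L"
  by (rule free_eq_invariant[where f = "\<lambda>w. act w L"]) (simp_all add: act_cancel normal_form_act)

lemma act_in_normal_closure: "in_normal_closure Conj (S_C C S) W \<Longrightarrow> act W [] = []"
  unfolding in_normal_closure_def using act_free_eq act_conj_products normal_form_Nil by metis

definition trivial_loop :: "(nat \<times> nat) word \<Rightarrow> bool" where
  "trivial_loop P \<longleftrightarrow>
     P \<noteq> [] \<and> is_path P \<and> source (hd P) = target (last P) \<and> trivial_in_Q C S (path_label P)"

lemma maximal_path_prefix:
  "w \<noteq> [] \<Longrightarrow>
    \<exists>P w'. w = P @ w' \<and> P \<noteq> [] \<and> is_path P \<and> (w' \<noteq> [] \<longrightarrow> target (last P) \<noteq> source (hd w'))"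
proof (induction w)
  case (Cons a w)
  show ?case
  proof (cases "w \<noteq> [] \<and> target a = source (hd w)")
    case True
    then obtain P w' where "w = P @ w'" "P \<noteq> []" "is_path P"
        "w' \<noteq> [] \<longrightarrow> target (last P) \<noteq> source (hd w')"
      using Cons.IH by blast
    with True show ?thesis
      by (intro exI[of _ "a # P"] exI[of _ w']) (auto simp: successively_Cons)
  next
    case False
    then show ?thesis
      by (intro exI[of _ "[a]"] exI[of _ w]) auto
  qed
qed simp

lemma act_starts_at:
  assumes "\<forall>P. sublist P w \<longrightarrow> \<not> trivial_loop P" "w \<noteq> []"
  shows "starts_at (source (hd w)) (act w [])"
  using assms
proof (induction w rule: length_induct)
  case (1 w)
  obtain P w' where P: "w = P @ w'" "P \<noteq> []" "is_path P"
      and maximal: "w' \<noteq> [] \<longrightarrow> target (last P) \<noteq> source (hd w')"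
    using maximal_path_prefix[OF \<open>w \<noteq> []\<close>] by blast
  have rest: "act w' [] = [] \<or> (\<exists>e'. e' \<noteq> target (last P) \<and> starts_at e' (act w' []))"
  proof (cases "w' = []")
    case False
    have "\<forall>P'. sublist P' w' \<longrightarrow> \<not> trivial_loop P'"
      using "1.prems"(1) P(1) by (meson sublist_append_leftI sublist_order.dual_order.trans)
    then have "starts_at (source (hd w')) (act w' [])"
      using "1.IH" False P by simp
    then show ?thesis
      using maximal False by (intro disjI2 exI[of _ "source (hd w')"]) auto
  qed simp
  have "\<not> (source (hd P) = target (last P) \<and> trivial_in_Q C S (path_label P))"
    using "1.prems"(1) P by (auto simp: trivial_loop_def)
  moreover have
    "act w [] = mul_segment (source (hd P)) (path_label P) (target (last P)) (act w' [])"
    using P by (simp add: act_path normal_form_act)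
  ultimately show ?case
    using mul_segment_starts_at[OF rest] P by simp
qed

lemma trivial_loop_exists:
  assumes "in_normal_closure Conj (S_C C S) W" "W \<noteq> []"
  shows "\<exists>P. sublist P W \<and> trivial_loop P"
proof (rule ccontr)
  assume "\<nexists>P. sublist P W \<and> trivial_loop P"
  then have "starts_at (source (hd W)) (act W [])"
    using act_starts_at assms(2) by blast
  then show False
    using act_in_normal_closure[OF assms(1)] by (simp add: starts_at_def)
qed

lemma trivial_loop_cyclically_reduced:
  "reduced P \<Longrightarrow> trivial_loop P \<Longrightarrow> \<exists>P'. sublist P' P \<and> trivial_loop P' \<and> cyclically_reduced P'"
proof (induction P rule: length_induct)
  case (1 P)
  show ?case
  proof (cases "hd P = inv_letter (last P)")
    case False
    then show ?thesis
      using "1.prems" by (auto simp: cyclically_reduced_def)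
  next
    case True
    obtain a P1 where P: "P = a # P1"
      using "1.prems"(2) by (cases P) (auto simp: trivial_loop_def)
    with True obtain M where M: "P1 = M @ [inv_letter a]"
      by (metis inv_letter_inv_letter inv_letter_neq(1) last.simps list.sel(1) snoc_eq_iff_butlast)
    have "M \<noteq> []"
      using "1.prems"(1) P M by (auto simp: reduced_Cons)
    have "reduced M" and "is_path M"
      and ends: "target a = source (hd M)" "target (last M) = target a"
      using "1.prems" P M \<open>M \<noteq> []\<close>
      by (auto simp: reduced_Cons reduced_append trivial_loop_def successively_Cons
          successively_append_iff)
    have "trivial_in_Q C S (label a @ path_label M @ inv_word (label a))"
      using "1.prems"(2) P M by (simp add: trivial_loop_def)
    then have "trivial_in_Q C S (path_label M)"
      using N_rotate[of "label a" "path_label M @ inv_word (label a)"]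
        N_cancel_inv_word'[of "path_label M" "label a" "[]"]
      by simp
    then have "trivial_loop M"
      using \<open>M \<noteq> []\<close> \<open>is_path M\<close> ends by (simp add: trivial_loop_def)
    moreover have "sublist M P" and "length M < length P"
      using P M sublist_appendI[of M "[a]" "[inv_letter a]"] by auto
    ultimately show ?thesis
      using "1.IH" \<open>reduced M\<close> by (meson sublist_order.dual_order.trans)
  qed
qed

section \<open>Reduced loops in the rose\<close>

lemma straight_path_forward:
  "is_path P \<Longrightarrow> reduced P \<Longrightarrow> P \<in> words_over (YC C m) \<Longrightarrow> \<forall>x\<in>set (butlast P). target x \<noteq> None \<Longrightarrow>
    P \<noteq> [] \<Longrightarrow> hd P = ((j, i), False) \<Longrightarrow> last P = ((j + length P - 1, i), False)"
proof (induction P arbitrary: j)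
  case (Cons a P)
  show ?case
  proof (cases "P = []")
    case False
    then obtain b P' where P: "P = b # P'"
      by (cases P) auto
    obtain jb ib eb where b: "b = ((jb, ib), eb)"
      by (metis prod.collapse)
    have a: "a = ((j, i), False)"
      using Cons.prems by simp
    have "target a \<noteq> None"
      using Cons.prems(4) P by simp
    then have "target a = Some (j, i)"
      using a by (auto simp: vertex_def split: if_splits)
    moreover have "target a = source b" "b \<noteq> inv_letter a" "1 \<le> jb"
      using Cons.prems P b by (auto simp: reduced_Cons words_over_def YC_def)
    ultimately have "b = ((j + 1, i), False)"
      using a b by (cases eb) (auto simp: vertex_def inv_letter_def split: if_splits)
    then have "last P = ((j + 1 + length P - 1, i), False)"
      using Cons.IH[of "j + 1"] Cons.prems False P
      by (auto simp: reduced_Cons words_over_def successively_Cons)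
    then show ?thesis
      using False by simp
  qed (use Cons.prems in simp)
qed simp

lemma straight_path_backward:
  "is_path P \<Longrightarrow> reduced P \<Longrightarrow> P \<in> words_over (YC C m) \<Longrightarrow> \<forall>x\<in>set (butlast P). target x \<noteq> None \<Longrightarrow>
    P \<noteq> [] \<Longrightarrow> hd P = ((j, i), True) \<Longrightarrow> last P = ((j + 1 - length P, i), True) \<and> length P \<le> j"
proof (induction P arbitrary: j)
  case (Cons a P)
  have a: "a = ((j, i), True)"
    using Cons.prems by simp
  have "1 \<le> j"
    using Cons.prems(3) a by (simp add: words_over_def YC_def)
  show ?case
  proof (cases "P = []")
    case False
    then obtain b P' where P: "P = b # P'"
      by (cases P) auto
    obtain jb ib eb where b: "b = ((jb, ib), eb)"
      by (metis prod.collapse)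
    have "target a \<noteq> None"
      using Cons.prems(4) P by simp
    then have "target a = Some (j - 1, i)"
      using a by (auto simp: vertex_def split: if_splits)
    moreover have "target a = source b" "b \<noteq> inv_letter a" "1 \<le> jb"
      using Cons.prems P b by (auto simp: reduced_Cons words_over_def YC_def)
    ultimately have "b = ((j - 1, i), True)" and "2 \<le> j"
      using a b by (cases eb; auto simp: vertex_def inv_letter_def split: if_splits)+
    then have "last P = ((j - 1 + 1 - length P, i), True) \<and> length P \<le> j - 1"
      using Cons.IH[of "j - 1"] Cons.prems False P
      by (auto simp: reduced_Cons words_over_def successively_Cons)
    then show ?thesis
      using False \<open>2 \<le> j\<close> by auto
  qed (use Cons.prems \<open>1 \<le> j\<close> in simp)
qed simp

lemma closed_path_visits_base:
  assumes path: "is_path P" and "reduced P" and over: "P \<in> words_over (YC C m)"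
    and "P \<noteq> []" and closed: "source (hd P) = target (last P)"
  shows "\<exists>x\<in>set P. target x = None"
proof (rule ccontr)
  assume "\<not> ?thesis"
  then have inner: "\<forall>x\<in>set (butlast P). target x \<noteq> None" and "target (last P) \<noteq> None"
    using \<open>P \<noteq> []\<close> by (auto dest: in_set_butlastD)
  obtain j i e where hd: "hd P = ((j, i), e)"
    by (metis prod.collapse)
  obtain n where n: "length P = Suc n"
    using \<open>P \<noteq> []\<close> by (cases P) auto
  show False
  proof (cases e)
    case False
    then have "last P = ((j + length P - 1, i), False)"
      using straight_path_forward[OF path \<open>reduced P\<close> over inner \<open>P \<noteq> []\<close>] hd by simp
    then show False
      using closed hd False \<open>target (last P) \<noteq> None\<close> n
      by (auto simp: vertex_def split: if_splits)
  next
    case True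
    then have "last P = ((j + 1 - length P, i), True)" "length P \<le> j"
      using straight_path_backward[OF path \<open>reduced P\<close> over inner \<open>P \<noteq> []\<close>] hd by simp_all
    then show False
      using closed hd True \<open>target (last P) \<noteq> None\<close> n
      by (auto simp: vertex_def split: if_splits)
  qed
qed

lemma base_path_length:
  assumes path: "is_path V" and "reduced V" and over: "V \<in> words_over (YC C m)" and "V \<noteq> []"
    and from_base: "source (hd V) = None" and to_base: "target (last V) = None"
  shows "C \<le> length V"
proof -
  have "\<exists>x\<in>set V. target x = None"
    using to_base \<open>V \<noteq> []\<close> last_in_set by metis
  then obtain Q x V' where V: "V = Q @ x # V'" and x: "target x = None"
    and Q: "\<forall>y\<in>set Q. target y \<noteq> None"
    by (rule split_list_first_propE)
  let ?P = "Q @ [x]"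
  have "is_path ?P" "reduced ?P" "?P \<in> words_over (YC C m)" "\<forall>y\<in>set (butlast ?P). target y \<noteq> None"
      "?P \<noteq> []" "hd ?P = hd V" "last ?P = x"
    using path \<open>reduced V\<close> over Q V
    by (auto simp: successively_append_iff successively_Cons reduced_append reduced_Cons
        words_over_def hd_append)
  note straight = straight_path_forward[OF this(1-5)] straight_path_backward[OF this(1-5)]
  obtain j i e where hd: "hd V = ((j, i), e)"
    by (metis prod.collapse)
  have "1 \<le> j" "j \<le> C"
    using over hd \<open>V \<noteq> []\<close> hd_in_set[of V] by (auto simp: words_over_def YC_def)
  have "C \<le> length ?P"
  proof (cases e)
    case False
    then have "j = 1"
      using from_base hd \<open>1 \<le> j\<close> \<open>j \<le> C\<close> by (auto simp: vertex_def split: if_splits)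
    then show ?thesis
      using straight(1)[of 1 i] x hd False \<open>hd ?P = hd V\<close> \<open>last ?P = x\<close>
      by (auto simp: vertex_def split: if_splits)
  next
    case True
    then have "j = C"
      using from_base hd \<open>1 \<le> j\<close> \<open>j \<le> C\<close> by (auto simp: vertex_def split: if_splits)
    then show ?thesis
      using straight(2)[of C i] x hd True \<open>hd ?P = hd V\<close> \<open>last ?P = x\<close>
      by (auto simp: vertex_def split: if_splits)
  qed
  then show ?thesis
    using V by simp
qed

lemma trivial_loop_rotate_to_base:
  assumes "cyclically_reduced P" and loop: "trivial_loop P" and over: "P \<in> words_over (YC C m)"
  obtains V j where "P = rotate j V" "reduced V" "trivial_loop V" "source (hd V) = None"
proof -
  have P: "P \<noteq> []" "is_path P" "source (hd P) = target (last P)" "trivial_in_Q C S (path_label P)"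
    using loop by (simp_all add: trivial_loop_def)
  have red: "reduced P" "hd P \<noteq> inv_letter (last P)"
    using \<open>cyclically_reduced P\<close> P(1) by (simp_all add: cyclically_reduced_def)
  obtain x where "x \<in> set P" "target x = None"
    using closed_path_visits_base[OF P(2) red(1) over P(1,3)] by blast
  then obtain P1 P2 where split: "P = (P1 @ [x]) @ P2"
    by (metis append.assoc append_Cons append_Nil split_list)
  define V where "V = P2 @ (P1 @ [x])"
  have hd_P: "hd P = hd (P1 @ [x])" and last_P: "P2 \<noteq> [] \<Longrightarrow> last P = last P2"
    using split by (simp_all add: hd_append)
  have "P = rotate (length P2) V"
    by (simp add: V_def split rotate_append)
  moreover have "reduced V"
  proof -
    have "reduced (P1 @ [x])" "reduced P2"
      using red(1) split by (metis reduced_append)+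
    then show ?thesis
      unfolding V_def reduced_append using red(2) hd_P last_P by auto
  qed
  moreover have "is_path V"
  proof -
    have "is_path (P1 @ [x])" "is_path P2"
      using P(2) split by (metis successively_append_iff)+
    then show ?thesis
      unfolding V_def successively_append_iff using P(3) hd_P last_P by (cases "P2 = []") auto
  qed
  moreover have "source (hd V) = None"
  proof (cases "P2 = []")
    case True
    then show ?thesis
      using P(3) split \<open>target x = None\<close> by (simp add: V_def)
  next
    case False
    then have "target x = source (hd P2)"
      using P(2) split by (simp add: successively_append_iff successively_Cons)
    then show ?thesis
      using False \<open>target x = None\<close> by (simp add: V_def)
  qed
  moreover have "trivial_in_Q C S (path_label V)"
    using P(4) split N_rotate by (simp add: V_def)
  ultimately show ?thesis
    using that \<open>target x = None\<close> by (simp add: trivial_loop_def V_def)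
qed

text \<open>The path from the base vertex to v in the spanning tree of all edges except the a_{C,i}.\<close>

definition tree_path :: "(nat \<times> nat) option \<Rightarrow> (nat \<times> nat) word" where
  "tree_path v = (case v of None \<Rightarrow> [] | Some (j, i) \<Rightarrow> map (\<lambda>k. ((k, i), False)) [1..<Suc j])"

lemma tree_path_vertex:
  "tree_path (vertex j i) = (if j < C then map (\<lambda>k. ((k, i), False)) [1..<Suc j] else [])"
  by (auto simp: tree_path_def vertex_def)

lemma tree_path_letter:
  assumes "fst a \<in> YC C m"
  shows "free_eq (tree_path (source a) @ [a] @ inv_word (tree_path (target a)))
    (subst_A C (label a))"
proof -
  obtain j i e where a: "a = ((j, i), e)"
    by (metis prod.collapse)
  have j: "1 \<le> j" "j \<le> C"
    using assms a by (auto simp: YC_def)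
  let ?a = "((j, i), False)"
  have upt: "[1..<Suc j] = [1..<j] @ [j]" and "j - 1 < C" and "Suc (j - 1) = j"
    using j by simp_all
  have forward: "free_eq (tree_path (source ?a) @ [?a] @ inv_word (tree_path (target ?a)))
      (subst_A C (label ?a))"
  proof (cases "j = C")
    case True
    then show ?thesis
      using j upt \<open>j - 1 < C\<close> \<open>Suc (j - 1) = j\<close> by (simp add: tree_path_vertex A_word_def)
  next
    case False
    then show ?thesis
      using j upt \<open>j - 1 < C\<close> \<open>Suc (j - 1) = j\<close>
        free_eq_cancel_inv_word[of "[]" "map (\<lambda>k. ((k, i), False)) [1..<Suc j]" "[]"]
      by (simp add: tree_path_vertex)
  qed
  show ?thesis
  proof (cases e)
    case True
    then have "a = inv_letter ?a"
      by (simp add: a inv_letter_def)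
    then show ?thesis
      using free_eq_inv_word[OF forward] by simp
  qed (use forward a in simp)
qed

lemma tree_path_path:
  "is_path P \<Longrightarrow> P \<noteq> [] \<Longrightarrow> P \<in> words_over (YC C m) \<Longrightarrow>
    free_eq (tree_path (source (hd P)) @ P @ inv_word (tree_path (target (last P))))
      (subst_A C (path_label P))"
proof (induction P rule: induct_list012)
  case (2 a)
  then show ?case
    using tree_path_letter[of a m] by (simp add: words_over_def)
next
  case (3 a b w)
  let ?T = tree_path and ?P = "b # w"
  have "fst a \<in> YC C m" and "target a = source b"
    using "3.prems" by (simp_all add: words_over_def)
  have IH: "free_eq (?T (source b) @ ?P @ inv_word (?T (target (last ?P))))
      (subst_A C (path_label ?P))"
    using "3.IH" "3.prems" by (simp add: successively_Cons words_over_def)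
  have "free_eq (?T (source a) @ (a # ?P) @ inv_word (?T (target (last ?P))))
      ((?T (source a) @ [a] @ inv_word (?T (target a))) @
        (?T (source b) @ ?P @ inv_word (?T (target (last ?P)))))"
    using \<open>target a = source b\<close> free_eq_sym[OF free_eq_cancel_inv_word'[of "?T (source a) @ [a]"
          "?T (target a)" "?P @ inv_word (?T (target (last ?P)))"]]
    by simp
  also have "free_eq \<dots>
      (subst_A C (label a) @ (?T (source b) @ ?P @ inv_word (?T (target (last ?P)))))"
    using free_eq_append_cong[OF tree_path_letter[OF \<open>fst a \<in> YC C m\<close>], of "[]"] by simp
  also have "free_eq \<dots> (subst_A C (label a) @ subst_A C (path_label ?P))"
    using free_eq_append_cong[OF IH, of "subst_A C (label a)" "[]"] by simp
  finally show ?case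
    by simp
qed simp

lemma base_loop_in_normal_closure:
  assumes "trivial_loop V" "source (hd V) = None" "V \<in> words_over (YC C m)"
  shows "in_normal_closure (range (subst_A C)) (S_C C S) V"
proof -
  have V: "free_eq V (subst_A C (path_label V))"
    using tree_path_path[of V m] assms by (simp add: trivial_loop_def tree_path_def)
  show ?thesis
    using in_normal_closure_free_eq[OF _ free_eq_sym[OF V]] assms(1)
    by (simp add: trivial_loop_def trivial_in_Q_def)
qed

lemma cyclically_reduced_trivial_loop_exists:
  assumes "in_normal_closure Conj (S_C C S) W" "W \<noteq> []" "reduced W"
  shows "\<exists>P. sublist P W \<and> trivial_loop P \<and> cyclically_reduced P"
proof -
  obtain P where "sublist P W" "trivial_loop P"
    using trivial_loop_exists[OF assms(1,2)] by blast
  moreover have "reduced P"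
    using \<open>sublist P W\<close> \<open>reduced W\<close> by (auto simp: sublist_def reduced_append)
  ultimately show ?thesis
    using trivial_loop_cyclically_reduced by (meson sublist_order.dual_order.trans)
qed

lemma trivial_loop_rotation_in_F:
  assumes S: "\<forall>r \<in> S. set r \<subseteq> {1..m}" and "cyclically_reduced P" "trivial_loop P"
    and over: "P \<in> words_over (YC C m)"
  obtains V j where "P = rotate j V" "reduced V" "in_normal_closure (F_words C m) (S_C C S) V"
    "C \<le> length V"
proof -
  obtain V j where V: "P = rotate j V" "reduced V" "trivial_loop V" "source (hd V) = None"
    using trivial_loop_rotate_to_base[OF assms(2,3) over] .
  have V_over: "V \<in> words_over (YC C m)"
    using over V(1) by (simp add: words_over_def)
  have "in_normal_closure (F_words C m) (S_C C S) V"
    using in_normal_closure_F_words[OF S base_loop_in_normal_closure[OF V(3,4) V_over] V_over] .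
  moreover have "C \<le> length V"
    using base_path_length[OF _ V(2) V_over] V(3,4) by (simp add: trivial_loop_def)
  ultimately show ?thesis
    using that V(1,2) by blast
qed

end

theorem lemma3p3:
  fixes m C :: nat and S :: "nat list set" and W :: "(nat \<times> nat) word"
  assumes C_pos: "1 \<le> C"
    and S_pos: "\<forall>r \<in> S. set r \<subseteq> {1..m}"
    and S_ne: "[] \<notin> S"
    and W_over: "W \<in> words_over (YC C m)"
    and W_ne: "W \<noteq> []"
    and W_cred: "cyclically_reduced W"
    and W_triv: "in_normal_closure (words_over (YC C m)) (S_C C S) W"
  shows "(\<exists>k p x s V. rotate k W = p @ x @ s \<and> x \<noteq> [] \<and>
            reduced V \<and> in_normal_closure (F_words C m) (S_C C S) V \<and>
            (\<exists>j. x = rotate j V))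
         \<and> length W \<ge> C"
proof -
  interpret subdivided_rose C S
    using C_pos by unfold_locales
  obtain P where P: "sublist P W" "trivial_loop P" "cyclically_reduced P"
    using cyclically_reduced_trivial_loop_exists[OF W_triv W_ne] W_cred
    by (auto simp: cyclically_reduced_def)
  have "P \<in> words_over (YC C m)"
    using W_over set_mono_sublist[OF P(1)] by (auto simp: words_over_def)
  then obtain V j where V: "P = rotate j V" "reduced V"
    "in_normal_closure (F_words C m) (S_C C S) V" "C \<le> length V"
    using trivial_loop_rotation_in_F[OF S_pos P(3,2)] by blast
  obtain p s where W: "rotate 0 W = p @ P @ s"
    using P(1) by (auto simp: sublist_def)
  have "P \<noteq> []"
    using P(2) by (simp add: trivial_loop_def)
  moreover have "C \<le> length W"
    using V(1,4) sublist_length_le[OF P(1)] by simp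
  ultimately show ?thesis
    using W V(1-3) by blast
qed

end
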